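(* Let $(\Omega,\Sigma,\mu)$ be a finite measure space and let $X(\mu)\subseteq L^0(\mu)$ be a Banach space of measurable functions. Then there is an equivalent norm on $X(\mu)$ under which $X(\mu)$ is a Banach function space if and only if $X(\mu)$ is a Banach rectangular function space with the subsequence property.
   Context: $L^0(\mu)$ is the space of equivalence classes (modulo $\mu$-a.e. equality) of real $\Sigma$-measurable functions. A Banach space of measurable functions is a vector subspace of $L^0(\mu)$ with a complete norm. It is rectangular if for some $C>0$, $\chi_Af\in X(\mu)$ and $\|\chi_Af\|\le C\|f\|$ for all $f\in X(\mu)$, $A\in\Sigma$. Subsequence property: whenever $f_n,f\in X(\mu)$ and $f_n\to f$ in norm, some subsequence converges to $f$ $\mu$-a.e. A Banach function space is such a space which is an ideal of $L^0(\mu)$ (if $f\in L^0(\mu)$, $g\in X(\mu)$, $|f|\le|g|$, then $f\in X(\mu)$) and whose norm satisfies $\|f\|\le\|g\|$ whenever $|f|\le|g|$. *)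

theory Defs
  imports "HOL-Analysis.Analysis"
begin

text \<open>Elements of L^0(mu) are represented by real Borel-measurable functions; a space
X(mu) is represented by a set X of such functions that is saturated under a.e. equality,
together with a functional N that is a norm on X modulo a.e. equality.\<close>

definition banach_mfs :: "'a measure \<Rightarrow> ('a \<Rightarrow> real) set \<Rightarrow> (('a \<Rightarrow> real) \<Rightarrow> real) \<Rightarrow> bool" where
  "banach_mfs M X N \<longleftrightarrow>
     X \<subseteq> borel_measurable M \<and>
     (\<forall>f\<in>X. \<forall>g\<in>borel_measurable M. (AE x in M. f x = g x) \<longrightarrow> g \<in> X) \<and>
     (\<lambda>x. 0) \<in> X \<and>
     (\<forall>f\<in>X. \<forall>g\<in>X. (\<lambda>x. f x + g x) \<in> X) \<and>
     (\<forall>f\<in>X. \<forall>c. (\<lambda>x. c * f x) \<in> X) \<and>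
     (\<forall>f\<in>X. 0 \<le> N f) \<and>
     (\<forall>f\<in>X. N f = 0 \<longleftrightarrow> (AE x in M. f x = 0)) \<and>
     (\<forall>f\<in>X. \<forall>c. N (\<lambda>x. c * f x) = \<bar>c\<bar> * N f) \<and>
     (\<forall>f\<in>X. \<forall>g\<in>X. N (\<lambda>x. f x + g x) \<le> N f + N g) \<and>
     (\<forall>s. (\<forall>n. s n \<in> X) \<longrightarrow>
          (\<forall>e>0. \<exists>K. \<forall>m\<ge>K. \<forall>n\<ge>K. N (\<lambda>x. s m x - s n x) < e) \<longrightarrow>
          (\<exists>f\<in>X. (\<lambda>n. N (\<lambda>x. s n x - f x)) \<longlonglongrightarrow> 0))"

definition rectangular :: "'a measure \<Rightarrow> ('a \<Rightarrow> real) set \<Rightarrow> (('a \<Rightarrow> real) \<Rightarrow> real) \<Rightarrow> bool" where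
  "rectangular M X N \<longleftrightarrow>
     (\<exists>C>0. \<forall>f\<in>X. \<forall>A\<in>sets M.
        (\<lambda>x. indicator A x * f x) \<in> X \<and> N (\<lambda>x. indicator A x * f x) \<le> C * N f)"

definition subsequence_property :: "'a measure \<Rightarrow> ('a \<Rightarrow> real) set \<Rightarrow> (('a \<Rightarrow> real) \<Rightarrow> real) \<Rightarrow> bool" where
  "subsequence_property M X N \<longleftrightarrow>
     (\<forall>fs f. (\<forall>n. fs n \<in> X) \<longrightarrow> f \<in> X \<longrightarrow> (\<lambda>n. N (\<lambda>x. fs n x - f x)) \<longlonglongrightarrow> 0 \<longrightarrow>
        (\<exists>r. strict_mono r \<and> (AE x in M. (\<lambda>n. fs (r n) x) \<longlonglongrightarrow> f x)))"

definition banach_function_space :: "'a measure \<Rightarrow> ('a \<Rightarrow> real) set \<Rightarrow> (('a \<Rightarrow> real) \<Rightarrow> real) \<Rightarrow> bool" where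
  "banach_function_space M X N \<longleftrightarrow>
     banach_mfs M X N \<and>
     (\<forall>f\<in>borel_measurable M. \<forall>g\<in>X. (AE x in M. \<bar>f x\<bar> \<le> \<bar>g x\<bar>) \<longrightarrow> f \<in> X) \<and>
     (\<forall>f\<in>X. \<forall>g\<in>X. (AE x in M. \<bar>f x\<bar> \<le> \<bar>g x\<bar>) \<longrightarrow> N f \<le> N g)"

definition equivalent_norms :: "('a \<Rightarrow> real) set \<Rightarrow> (('a \<Rightarrow> real) \<Rightarrow> real) \<Rightarrow> (('a \<Rightarrow> real) \<Rightarrow> real) \<Rightarrow> bool" where
  "equivalent_norms X N N' \<longleftrightarrow>
     (\<exists>c C. 0 < c \<and> 0 < C \<and> (\<forall>f\<in>X. c * N f \<le> N' f \<and> N' f \<le> C * N f))"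

end

theory Submission
  imports Defs
begin

(* The renorming is |||f||| = sup {||psi f|| : psi measurable, |psi| <= 1}, a lattice norm by
   construction; the point is that it is equivalent to ||.||, i.e. ||phi g|| <= 4 C ||g|| for
   every such multiplier phi. Rectangularity gives this for the multiplier floor phi, which
   takes values in {-1, 0, 1}. The dyadic truncations floor (2^n phi) / 2^n increase in steps
   of 2^-(n+1) times an indicator, so phi g is the norm limit of a geometric series, and the
   subsequence property identifies that limit with phi g.
   Conversely, a lattice norm is rectangular with C = 1, and by the Riesz-Fischer argument a
   norm-null sequence has an a.e. null subsequence; both properties pass to equivalent norms. *)

lemma floor_double_cases:
  fixes y :: real
  shows "\<lfloor>2 * y\<rfloor> = 2 * \<lfloor>y\<rfloor> \<or> \<lfloor>2 * y\<rfloor> = 2 * \<lfloor>y\<rfloor> + 1"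
proof -
  have "2 * \<lfloor>y\<rfloor> \<le> \<lfloor>2 * y\<rfloor>" "\<lfloor>2 * y\<rfloor> < 2 * \<lfloor>y\<rfloor> + 2"
    by (simp_all add: le_floor_iff floor_less_iff) linarith+
  then show ?thesis by linarith
qed

definition dyadic_floor :: "nat \<Rightarrow> real \<Rightarrow> real" where
  "dyadic_floor n y = \<lfloor>2 ^ n * y\<rfloor> / 2 ^ n"

lemma borel_measurable_dyadic_floor [measurable]: "dyadic_floor n \<in> borel_measurable borel"
  unfolding dyadic_floor_def by measurable

lemma dyadic_floor_0 [simp]: "dyadic_floor 0 y = \<lfloor>y\<rfloor>"
  by (simp add: dyadic_floor_def)

lemma dyadic_floor_Suc_diff:
  "dyadic_floor (Suc n) y - dyadic_floor n y \<in> {0, (1/2) ^ Suc n}"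
proof -
  have "\<lfloor>2 ^ Suc n * y\<rfloor> = \<lfloor>2 * (2 ^ n * y)\<rfloor>" by (simp add: mult.assoc)
  then show ?thesis
    using floor_double_cases[of "2 ^ n * y"]
    by (auto simp: dyadic_floor_def field_simps power_one_over)
qed

lemma dyadic_floor_tendsto: "(\<lambda>n. dyadic_floor n y) \<longlonglongrightarrow> y"
proof (rule tendsto_sandwich)
  have "y - (1/2) ^ n \<le> dyadic_floor n y" for n
  proof -
    have "2 ^ n * y \<le> \<lfloor>2 ^ n * y\<rfloor> + 1" by linarith
    then have "y \<le> (\<lfloor>2 ^ n * y\<rfloor> + 1) / 2 ^ n" by (simp add: field_simps)
    then show ?thesis by (simp add: dyadic_floor_def power_one_over add_divide_distrib)
  qed
  then show "\<forall>\<^sub>F n in sequentially. y - (1/2) ^ n \<le> dyadic_floor n y"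
    by simp
  show "\<forall>\<^sub>F n in sequentially. dyadic_floor n y \<le> y"
    by (intro always_eventually allI) (simp add: dyadic_floor_def field_simps)
  show "(\<lambda>n. y - (1/2) ^ n) \<longlonglongrightarrow> y"
    using tendsto_diff[OF tendsto_const LIMSEQ_power_zero[of "1/2::real"]] by simp
qed simp

lemma floor_unit_interval:
  fixes y :: real
  assumes "\<bar>y\<bar> \<le> 1"
  shows "\<lfloor>y\<rfloor> = (if y = 1 then 1 else if y < 0 then -1 else 0)"
  using assms by (auto simp: floor_eq_iff abs_le_iff)

lemma tendsto_zero_fast_subseq:
  fixes a :: "nat \<Rightarrow> real"
  assumes "a \<longlonglongrightarrow> 0"
  obtains r where "strict_mono r" "\<And>k. a (r k) < (1/2) ^ k"
proof -
  have "\<exists>K. \<forall>n\<ge>K. a n < (1/2) ^ k" for k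
    using order_tendstoD(2)[OF assms, of "(1/2) ^ k"] by (simp add: eventually_sequentially)
  then obtain K where K: "\<And>k n. K k \<le> n \<Longrightarrow> a n < (1/2) ^ k" by metis
  define r where "r k = (\<Sum>j\<le>k. K j) + k" for k
  have "strict_mono r" unfolding strict_mono_Suc_iff r_def by simp
  moreover have "K k \<le> r k" for k
    using member_le_sum[of k "{..k}" K] unfolding r_def by simp
  ultimately show thesis using K that by blast
qed

definition unit_multipliers :: "'a measure \<Rightarrow> ('a \<Rightarrow> real) set" where
  "unit_multipliers M = {\<psi> \<in> borel_measurable M. \<forall>x. \<bar>\<psi> x\<bar> \<le> 1}"

lemma one_in_unit_multipliers: "(\<lambda>x. 1) \<in> unit_multipliers M"
  by (simp add: unit_multipliers_def)

lemma unit_multipliers_mult: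
  "\<psi> \<in> unit_multipliers M \<Longrightarrow> \<phi> \<in> unit_multipliers M \<Longrightarrow> (\<lambda>x. \<psi> x * \<phi> x) \<in> unit_multipliers M"
  by (auto simp: unit_multipliers_def abs_mult intro: mult_le_one borel_measurable_times)

lemma AE_abs_le_imp_unit_multiple:
  fixes f g :: "'a \<Rightarrow> real"
  assumes "f \<in> borel_measurable M" "g \<in> borel_measurable M" and le: "AE x in M. \<bar>f x\<bar> \<le> \<bar>g x\<bar>"
  obtains \<phi> where "\<phi> \<in> unit_multipliers M" "AE x in M. f x = \<phi> x * g x"
proof
  define \<phi> where "\<phi> x = max (-1) (min 1 (if g x = 0 then 0 else f x / g x))" for x
  show "\<phi> \<in> unit_multipliers M"
    unfolding unit_multipliers_def \<phi>_def using assms(1,2) by auto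
  show "AE x in M. f x = \<phi> x * g x"
    using le
  proof eventually_elim
    case (elim x)
    show ?case
    proof (cases "g x = 0")
      case False
      with elim have "\<bar>f x / g x\<bar> \<le> 1" by (simp add: abs_divide divide_le_eq_1)
      then have "-1 \<le> f x / g x" "f x / g x \<le> 1" by linarith+
      then have "\<phi> x = f x / g x" by (simp add: \<phi>_def False min_absorb2 max_absorb2)
      with False show ?thesis by simp
    qed (use elim in \<open>simp add: \<phi>_def\<close>)
  qed
qed

lemma rectangular_equivalent_norms:
  assumes "equivalent_norms X N P" "rectangular M X P"
  shows "rectangular M X N"
proof -
  obtain c C where c: "0 < c" "0 < C"
    and cC: "\<And>f. f \<in> X \<Longrightarrow> c * N f \<le> P f \<and> P f \<le> C * N f"
    using assms(1) unfolding equivalent_norms_def by blast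
  obtain K where K: "0 < K"
    and R: "\<And>f A. f \<in> X \<Longrightarrow> A \<in> sets M \<Longrightarrow>
      (\<lambda>x. indicator A x * f x) \<in> X \<and> P (\<lambda>x. indicator A x * f x) \<le> K * P f"
    using assms(2) unfolding rectangular_def by blast
  have "N (\<lambda>x. indicator A x * f x) \<le> K * C / c * N f" if f: "f \<in> X" and A: "A \<in> sets M" for f A
  proof -
    have "c * N (\<lambda>x. indicator A x * f x) \<le> K * (C * N f)"
      using cC[OF f] cC R[OF f A] K by (meson mult_left_mono order.trans less_imp_le)
    then show ?thesis using c by (simp add: field_simps)
  qed
  then show ?thesis
    unfolding rectangular_def using R c K by (intro exI[of _ "K * C / c"]) auto
qed

locale banach_mfs_norm =
  fixes M :: "'a measure" and X :: "('a \<Rightarrow> real) set" and N :: "('a \<Rightarrow> real) \<Rightarrow> real"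
  assumes banach_mfs: "banach_mfs M X N"
begin

lemma mem_measurable: "f \<in> X \<Longrightarrow> f \<in> borel_measurable M"
  and mem_AE_eq: "f \<in> X \<Longrightarrow> g \<in> borel_measurable M \<Longrightarrow> (AE x in M. f x = g x) \<Longrightarrow> g \<in> X"
  and zero_mem: "(\<lambda>x. 0) \<in> X"
  and add_mem: "f \<in> X \<Longrightarrow> g \<in> X \<Longrightarrow> (\<lambda>x. f x + g x) \<in> X"
  and scale_mem: "f \<in> X \<Longrightarrow> (\<lambda>x. c * f x) \<in> X"
  and norm_nonneg: "f \<in> X \<Longrightarrow> 0 \<le> N f"
  and norm_eq_0_iff: "f \<in> X \<Longrightarrow> N f = 0 \<longleftrightarrow> (AE x in M. f x = 0)"
  and norm_scale: "f \<in> X \<Longrightarrow> N (\<lambda>x. c * f x) = \<bar>c\<bar> * N f"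
  and norm_triangle: "f \<in> X \<Longrightarrow> g \<in> X \<Longrightarrow> N (\<lambda>x. f x + g x) \<le> N f + N g"
  and complete: "(\<And>n. s n \<in> X) \<Longrightarrow> (\<And>e. e > 0 \<Longrightarrow> \<exists>K. \<forall>m\<ge>K. \<forall>n\<ge>K. N (\<lambda>x. s m x - s n x) < e)
      \<Longrightarrow> \<exists>f\<in>X. (\<lambda>n. N (\<lambda>x. s n x - f x)) \<longlonglongrightarrow> 0"
  using banach_mfs unfolding banach_mfs_def by blast+

lemma diff_mem: "f \<in> X \<Longrightarrow> g \<in> X \<Longrightarrow> (\<lambda>x. f x - g x) \<in> X"
  using add_mem[OF _ scale_mem[of g "-1"]] by simp

lemma norm_zero: "N (\<lambda>x. 0) = 0"
  using norm_eq_0_iff[OF zero_mem] by simp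

lemma norm_minus_commute: "f \<in> X \<Longrightarrow> g \<in> X \<Longrightarrow> N (\<lambda>x. f x - g x) = N (\<lambda>x. g x - f x)"
  using norm_scale[OF diff_mem, of g f "-1"] by simp

lemma norm_triangle_diff:
  "f \<in> X \<Longrightarrow> g \<in> X \<Longrightarrow> h \<in> X \<Longrightarrow> N (\<lambda>x. f x - h x) \<le> N (\<lambda>x. f x - g x) + N (\<lambda>x. g x - h x)"
  using norm_triangle[OF diff_mem diff_mem, of f g g h] by simp

lemma norm_diff_le: "f \<in> X \<Longrightarrow> g \<in> X \<Longrightarrow> N (\<lambda>x. f x - g x) \<le> N f + N g"
  using norm_triangle[OF _ scale_mem, of f g "-1"] norm_scale[of g "-1"] by simp

lemma norm_le_diff: "f \<in> X \<Longrightarrow> g \<in> X \<Longrightarrow> N f \<le> N g + N (\<lambda>x. f x - g x)"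
  using norm_triangle[OF _ diff_mem, of g f g] by simp

lemma norm_AE_eq:
  assumes f: "f \<in> X" and g: "g \<in> X" and eq: "AE x in M. f x = g x"
  shows "N f = N g"
proof -
  have "N (\<lambda>x. f x - g x) = 0" "N (\<lambda>x. g x - f x) = 0"
    using eq by (auto simp: norm_eq_0_iff diff_mem f g elim: AE_mp)
  then show ?thesis using norm_le_diff[OF f g] norm_le_diff[OF g f] by simp
qed

lemma tendsto_norm_diff_imp_le:
  assumes "\<And>n. s n \<in> X" "f \<in> X" "g \<in> X"
    and lim: "(\<lambda>n. N (\<lambda>x. s n x - f x)) \<longlonglongrightarrow> 0" and bound: "\<And>n. N (\<lambda>x. s n x - g x) \<le> b"
  shows "N (\<lambda>x. f x - g x) \<le> b"
proof (rule LIMSEQ_le_const)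
  show "(\<lambda>n. b + N (\<lambda>x. s n x - f x)) \<longlonglongrightarrow> b"
    using tendsto_add[OF tendsto_const lim] by simp
  have "N (\<lambda>x. f x - g x) \<le> b + N (\<lambda>x. s n x - f x)" for n
    using norm_triangle_diff[of f "s n" g] norm_minus_commute[of f "s n"] bound[of n] assms(1-3)
    by simp
  then show "\<exists>K. \<forall>n\<ge>K. N (\<lambda>x. f x - g x) \<le> b + N (\<lambda>x. s n x - f x)"
    by blast
qed

lemma geometric_increments_tail:
  assumes s: "\<And>n. s n \<in> X" and decay: "\<And>n. N (\<lambda>x. s (Suc n) x - s n x) \<le> B * (1/2) ^ n"
    and "n \<le> m"
  shows "N (\<lambda>x. s m x - s n x) \<le> 2 * B * (1/2) ^ n"
proof -
  have tail: "N (\<lambda>x. s m x - s n x) \<le> 2 * B * (1/2) ^ n - 2 * B * (1/2) ^ m"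
    using \<open>n \<le> m\<close>
  proof (induction m rule: dec_induct)
    case base
    then show ?case by (simp add: norm_zero)
  next
    case (step m)
    then show ?case
      using norm_triangle_diff[of "s (Suc m)" "s m" "s n"] s decay[of m] by simp
  qed
  have "0 \<le> B"
    using norm_nonneg[OF diff_mem[OF s s]] decay[of 0] by (metis power_0 mult_1_right order.trans)
  with tail show ?thesis
    by (simp add: diff_le_eq order_trans)
qed

lemma limit_of_geometric_increments:
  assumes s: "\<And>n. s n \<in> X" and decay: "\<And>n. N (\<lambda>x. s (Suc n) x - s n x) \<le> B * (1/2) ^ n"
  obtains f where "f \<in> X" "(\<lambda>n. N (\<lambda>x. s n x - f x)) \<longlonglongrightarrow> 0" "N (\<lambda>x. f x - s 0 x) \<le> 2 * B"
proof -
  note tail = geometric_increments_tail[OF s decay]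
  have "(\<lambda>n. 2 * B * (1/2::real) ^ n) \<longlonglongrightarrow> 0"
    using tendsto_mult_right_zero[OF LIMSEQ_power_zero[of "1/2::real"]] by simp
  have "\<exists>K. \<forall>m\<ge>K. \<forall>n\<ge>K. N (\<lambda>x. s m x - s n x) < e" if "e > 0" for e
  proof -
    obtain K where K: "\<And>n. K \<le> n \<Longrightarrow> 2 * B * (1/2) ^ n < e"
      using order_tendstoD(2)[OF \<open>(\<lambda>n. 2 * B * (1/2::real) ^ n) \<longlonglongrightarrow> 0\<close> \<open>e > 0\<close>]
      by (auto simp: eventually_sequentially)
    have "N (\<lambda>x. s m x - s n x) < e" if "K \<le> m" "K \<le> n" for m n
    proof (cases "n \<le> m")
      case True
      then show ?thesis using tail K that by (meson le_less_trans)
    next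
      case False
      then show ?thesis
        using tail[of m n] K[of m] that norm_minus_commute[OF s s, of m n] by simp
    qed
    then show ?thesis by blast
  qed
  then obtain f where f: "f \<in> X" and lim: "(\<lambda>n. N (\<lambda>x. s n x - f x)) \<longlonglongrightarrow> 0"
    using complete[of s, OF s] by blast
  moreover have "N (\<lambda>x. f x - s 0 x) \<le> 2 * B"
    using tendsto_norm_diff_imp_le[OF s f s lim] tail[of 0] by simp
  ultimately show thesis using that by blast
qed

lemma subsequence_property_equivalent_norms:
  assumes "equivalent_norms X N P" "subsequence_property M X P"
  shows "subsequence_property M X N"
  unfolding subsequence_property_def
proof (intro allI impI)
  fix fs f
  assume fs: "\<forall>n. fs n \<in> X" and f: "f \<in> X" and lim: "(\<lambda>n. N (\<lambda>x. fs n x - f x)) \<longlonglongrightarrow> 0"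
  obtain c C where "0 < c" and cC: "\<And>g. g \<in> X \<Longrightarrow> c * N g \<le> P g \<and> P g \<le> C * N g"
    using assms(1) unfolding equivalent_norms_def by blast
  have C: "0 \<le> P g \<and> P g \<le> C * N g" if "g \<in> X" for g
    using cC[OF that] norm_nonneg[OF that] \<open>0 < c\<close> by (smt (verit) mult_nonneg_nonneg)
  have "(\<lambda>n. P (\<lambda>x. fs n x - f x)) \<longlonglongrightarrow> 0"
  proof (rule tendsto_sandwich[of "\<lambda>n. 0" _ _ "\<lambda>n. C * N (\<lambda>x. fs n x - f x)"])
    show "(\<lambda>n. C * N (\<lambda>x. fs n x - f x)) \<longlonglongrightarrow> 0"
      using tendsto_mult_right_zero[OF lim] .
  qed (use C diff_mem fs f in auto)
  then show "\<exists>r. strict_mono r \<and> (AE x in M. (\<lambda>n. fs (r n) x) \<longlonglongrightarrow> f x)"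
    using assms(2) fs f unfolding subsequence_property_def by blast
qed

end

locale banach_lattice_norm = banach_mfs_norm +
  assumes mem_if_AE_abs_le:
      "f \<in> borel_measurable M \<Longrightarrow> g \<in> X \<Longrightarrow> (AE x in M. \<bar>f x\<bar> \<le> \<bar>g x\<bar>) \<Longrightarrow> f \<in> X"
    and norm_mono_AE: "f \<in> X \<Longrightarrow> g \<in> X \<Longrightarrow> (AE x in M. \<bar>f x\<bar> \<le> \<bar>g x\<bar>) \<Longrightarrow> N f \<le> N g"

lemma banach_function_space_iff_banach_lattice_norm:
  "banach_function_space M X N \<longleftrightarrow> banach_lattice_norm M X N"
  unfolding banach_function_space_def banach_lattice_norm_def banach_lattice_norm_axioms_def
    banach_mfs_norm_def
  by blast

context banach_lattice_norm
begin

lemma rectangular: "rectangular M X N"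
  unfolding rectangular_def
proof (intro exI[of _ 1] conjI ballI)
  fix f A assume f: "f \<in> X" and A: "A \<in> sets M"
  have le: "AE x in M. \<bar>indicator A x * f x\<bar> \<le> \<bar>f x\<bar>"
    by (simp add: indicator_def)
  show mem: "(\<lambda>x. indicator A x * f x) \<in> X"
    using mem_if_AE_abs_le[OF _ f le] mem_measurable[OF f] A by measurable
  show "N (\<lambda>x. indicator A x * f x) \<le> 1 * N f"
    using norm_mono_AE[OF mem f le] by simp
qed simp

lemma AE_le_norm_limit_of_incseq:
  assumes S: "\<And>n. S n \<in> X" and g: "g \<in> X" and inc: "\<And>x. incseq (\<lambda>n. S n x)"
    and lim: "(\<lambda>n. N (\<lambda>x. S n x - g x)) \<longlonglongrightarrow> 0"
  shows "AE x in M. \<forall>n. S n x \<le> g x"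
proof -
  have "AE x in M. S n x \<le> g x" for n
  proof -
    define w where "w x = max (S n x - g x) 0" for x
    have le: "\<bar>w x\<bar> \<le> \<bar>S m x - g x\<bar>" if "n \<le> m" for m x
      using incseqD[OF inc that, of x] by (simp add: w_def)
    have "w \<in> borel_measurable M"
      unfolding w_def using mem_measurable[OF S] mem_measurable[OF g] by measurable
    then have w: "w \<in> X"
      using mem_if_AE_abs_le[OF _ diff_mem[OF S g]] le[of n] by blast
    have "N w \<le> 0"
    proof (rule LIMSEQ_le_const[OF lim])
      show "\<exists>K. \<forall>m\<ge>K. N w \<le> N (\<lambda>x. S m x - g x)"
        using norm_mono_AE[OF w diff_mem[OF S g]] le by blast
    qed
    then have "AE x in M. w x = 0"
      using norm_nonneg[OF w] norm_eq_0_iff[OF w] by simp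
    then show ?thesis
      by eventually_elim (simp add: w_def)
  qed
  then show ?thesis
    by (simp add: AE_all_countable)
qed

text \<open>The Riesz--Fischer argument: a subsequence with summable norms is dominated by the
  norm limit of the partial sums of its absolute values.\<close>

lemma tendsto_norm_zero_imp_AE_subseq:
  assumes h: "\<And>n. h n \<in> X" and lim: "(\<lambda>n. N (h n)) \<longlonglongrightarrow> 0"
  obtains r where "strict_mono r" "AE x in M. (\<lambda>n. h (r n) x) \<longlonglongrightarrow> 0"
proof -
  obtain r where r: "strict_mono r" and fast: "\<And>k. N (h (r k)) < (1/2) ^ k"
    using tendsto_zero_fast_subseq[OF lim] by blast
  define u where "u k x = \<bar>h (r k) x\<bar>" for k x
  have u: "u k \<in> X" and u_norm: "N (u k) \<le> (1/2) ^ k" for k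
  proof -
    have le: "AE x in M. \<bar>u k x\<bar> \<le> \<bar>h (r k) x\<bar>"
      by (simp add: u_def)
    have "u k \<in> borel_measurable M"
      unfolding u_def using mem_measurable[OF h] by measurable
    then show u: "u k \<in> X"
      using mem_if_AE_abs_le[OF _ h le] by blast
    show "N (u k) \<le> (1/2) ^ k"
      using norm_mono_AE[OF u h le] fast[of k] by simp
  qed
  define S where "S n x = (\<Sum>k<n. u k x)" for n x
  have S: "S n \<in> X" for n
    by (induction n) (simp_all add: S_def zero_mem add_mem u)
  have "(\<lambda>x. S (Suc n) x - S n x) = u n" for n
    by (simp add: S_def fun_eq_iff)
  then have "N (\<lambda>x. S (Suc n) x - S n x) \<le> 1 * (1/2) ^ n" for n
    using u_norm by simp
  then obtain g where g: "g \<in> X" and S_lim: "(\<lambda>n. N (\<lambda>x. S n x - g x)) \<longlonglongrightarrow> 0"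
    using limit_of_geometric_increments[of S, OF S] by blast
  have "incseq (\<lambda>n. S n x)" for x
    unfolding S_def u_def by (intro incseq_SucI) simp
  then have "AE x in M. \<forall>n. S n x \<le> g x"
    using AE_le_norm_limit_of_incseq[OF S g _ S_lim] by blast
  then have "AE x in M. (\<lambda>n. h (r n) x) \<longlonglongrightarrow> 0"
  proof eventually_elim
    case (elim x)
    then have "summable (\<lambda>k. u k x)"
      by (intro summableI_nonneg_bounded[where x="g x"]) (auto simp: S_def u_def)
    then show ?case
      using summable_LIMSEQ_zero tendsto_rabs_zero_iff unfolding u_def by blast
  qed
  with r that show thesis by blast
qed

lemma subsequence_property: "subsequence_property M X N"
  unfolding subsequence_property_def
proof (intro allI impI)
  fix fs f
  assume fs: "\<forall>n. fs n \<in> X" and f: "f \<in> X" and lim: "(\<lambda>n. N (\<lambda>x. fs n x - f x)) \<longlonglongrightarrow> 0"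
  obtain r where r: "strict_mono r" and AE_lim: "AE x in M. (\<lambda>n. fs (r n) x - f x) \<longlonglongrightarrow> 0"
    using tendsto_norm_zero_imp_AE_subseq[of "\<lambda>n x. fs n x - f x"] diff_mem fs f lim by blast
  from AE_lim have "AE x in M. (\<lambda>n. fs (r n) x) \<longlonglongrightarrow> f x"
    by eventually_elim (simp add: LIM_zero_iff)
  with r show "\<exists>r. strict_mono r \<and> (AE x in M. (\<lambda>n. fs (r n) x) \<longlonglongrightarrow> f x)"
    by blast
qed

end

locale rectangular_subseq_norm = banach_mfs_norm +
  fixes C :: real
  assumes C_pos: "0 < C"
    and indicator_mult_mem: "f \<in> X \<Longrightarrow> A \<in> sets M \<Longrightarrow> (\<lambda>x. indicator A x * f x) \<in> X"
    and norm_indicator_mult_le: "f \<in> X \<Longrightarrow> A \<in> sets M \<Longrightarrow> N (\<lambda>x. indicator A x * f x) \<le> C * N f"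
    and subsequence_property: "subsequence_property M X N"
begin

lemma floor_mult_mem:
  assumes \<phi>: "\<phi> \<in> unit_multipliers M" and g: "g \<in> X"
  shows "(\<lambda>x. of_int \<lfloor>\<phi> x\<rfloor> * g x) \<in> X" and "N (\<lambda>x. of_int \<lfloor>\<phi> x\<rfloor> * g x) \<le> 2 * C * N g"
proof -
  have \<phi>_meas: "\<phi> \<in> borel_measurable M"
    using \<phi> unfolding unit_multipliers_def by blast
  define A where "A = {x \<in> space M. \<phi> x = 1}"
  define B where "B = {x \<in> space M. \<phi> x < 0}"
  have sets: "A \<in> sets M" "B \<in> sets M"
    using \<phi>_meas unfolding A_def B_def by measurable
  define t where "t x = indicator A x * g x - indicator B x * g x" for x
  have t: "t \<in> X"
    unfolding t_def using sets by (intro diff_mem indicator_mult_mem g)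
  have "N t \<le> N (\<lambda>x. indicator A x * g x) + N (\<lambda>x. indicator B x * g x)"
    unfolding t_def using sets by (intro norm_diff_le indicator_mult_mem g)
  also have "\<dots> \<le> 2 * C * N g"
    using norm_indicator_mult_le[OF g sets(1)] norm_indicator_mult_le[OF g sets(2)] by linarith
  finally have t_norm: "N t \<le> 2 * C * N g" .
  have "t x = of_int \<lfloor>\<phi> x\<rfloor> * g x" if "x \<in> space M" for x
    using floor_unit_interval[of "\<phi> x"] \<phi> that
    by (auto simp: t_def A_def B_def unit_multipliers_def indicator_def)
  then have eq: "AE x in M. t x = of_int \<lfloor>\<phi> x\<rfloor> * g x"
    by simp
  have "(\<lambda>x. of_int \<lfloor>\<phi> x\<rfloor> * g x) \<in> borel_measurable M"
    using \<phi>_meas mem_measurable[OF g] by measurable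
  then show mem: "(\<lambda>x. of_int \<lfloor>\<phi> x\<rfloor> * g x) \<in> X"
    using mem_AE_eq[OF t _ eq] by blast
  show "N (\<lambda>x. of_int \<lfloor>\<phi> x\<rfloor> * g x) \<le> 2 * C * N g"
    using norm_AE_eq[OF t mem eq] t_norm by simp
qed

lemma dyadic_step_mem:
  fixes n :: nat
  assumes \<phi>: "\<phi> \<in> borel_measurable M" and g: "g \<in> X"
  defines "d \<equiv> \<lambda>x. (dyadic_floor (Suc n) (\<phi> x) - dyadic_floor n (\<phi> x)) * g x"
  shows "d \<in> X" and "N d \<le> C * N g * (1/2) ^ n"
proof -
  define A where "A = {x \<in> space M. dyadic_floor (Suc n) (\<phi> x) \<noteq> dyadic_floor n (\<phi> x)}"
  have A: "A \<in> sets M"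
    using \<phi> unfolding A_def by measurable
  define c :: real where "c = (1/2) ^ Suc n"
  define t where "t x = c * (indicator A x * g x)" for x
  have t: "t \<in> X"
    unfolding t_def by (intro scale_mem indicator_mult_mem g A)
  have "N t = c * N (\<lambda>x. indicator A x * g x)"
    unfolding t_def using norm_scale[OF indicator_mult_mem[OF g A], of c] by (simp add: c_def)
  also have "\<dots> \<le> c * (C * N g)"
    using norm_indicator_mult_le[OF g A] by (simp add: c_def)
  also have "\<dots> = C * N g * (1/2) ^ n / 2"
    by (simp add: c_def)
  also have "\<dots> \<le> C * N g * (1/2) ^ n"
    using C_pos norm_nonneg[OF g] by simp
  finally have t_norm: "N t \<le> C * N g * (1/2) ^ n" .
  have "t x = d x" if "x \<in> space M" for x
    using dyadic_floor_Suc_diff[of n "\<phi> x"] that by (auto simp: t_def d_def A_def c_def indicator_def)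
  then have eq: "AE x in M. t x = d x"
    by simp
  have "d \<in> borel_measurable M"
    unfolding d_def using \<phi> mem_measurable[OF g] by measurable
  then show mem: "d \<in> X"
    using mem_AE_eq[OF t _ eq] by blast
  show "N d \<le> C * N g * (1/2) ^ n"
    using norm_AE_eq[OF t mem eq] t_norm by simp
qed

lemma dyadic_truncation_mem:
  assumes \<phi>: "\<phi> \<in> unit_multipliers M" and g: "g \<in> X"
  shows "(\<lambda>x. dyadic_floor n (\<phi> x) * g x) \<in> X"
proof (induction n)
  case 0
  then show ?case using floor_mult_mem(1)[OF \<phi> g] by simp
next
  case (Suc n)
  have "\<phi> \<in> borel_measurable M"
    using \<phi> unfolding unit_multipliers_def by blast
  from add_mem[OF Suc dyadic_step_mem(1)[OF this g, of n]] show ?case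
    by (simp add: algebra_simps)
qed

lemma unit_multiplier_mem:
  assumes \<phi>: "\<phi> \<in> unit_multipliers M" and g: "g \<in> X"
  shows "(\<lambda>x. \<phi> x * g x) \<in> X" and "N (\<lambda>x. \<phi> x * g x) \<le> 4 * C * N g"
proof -
  have \<phi>_meas: "\<phi> \<in> borel_measurable M"
    using \<phi> unfolding unit_multipliers_def by blast
  define s where "s n = (\<lambda>x. dyadic_floor n (\<phi> x) * g x)" for n
  have s0: "s 0 = (\<lambda>x. of_int \<lfloor>\<phi> x\<rfloor> * g x)"
    by (simp add: s_def fun_eq_iff)
  have step: "(\<lambda>x. s (Suc n) x - s n x) =
      (\<lambda>x. (dyadic_floor (Suc n) (\<phi> x) - dyadic_floor n (\<phi> x)) * g x)" for n
    by (simp add: s_def fun_eq_iff algebra_simps)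
  have s: "s n \<in> X" for n
    using dyadic_truncation_mem[OF \<phi> g] by (simp add: s_def)
  have "N (\<lambda>x. s (Suc n) x - s n x) \<le> C * N g * (1/2) ^ n" for n
    using dyadic_step_mem(2)[OF \<phi>_meas g] step by simp
  then obtain h where h: "h \<in> X" and lim: "(\<lambda>n. N (\<lambda>x. s n x - h x)) \<longlonglongrightarrow> 0"
    and h_s0: "N (\<lambda>x. h x - s 0 x) \<le> 2 * (C * N g)"
    using limit_of_geometric_increments[of s, OF s] by blast
  obtain r where r: "strict_mono r" and AE_lim: "AE x in M. (\<lambda>n. s (r n) x) \<longlonglongrightarrow> h x"
    using subsequence_property s h lim unfolding subsequence_property_def by blast
  have pointwise: "(\<lambda>n. s (r n) x) \<longlonglongrightarrow> \<phi> x * g x" for x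
    using LIMSEQ_subseq_LIMSEQ[OF tendsto_mult_right[OF dyadic_floor_tendsto] r]
    by (simp add: s_def o_def)
  from AE_lim have eq: "AE x in M. h x = \<phi> x * g x"
    by eventually_elim (use pointwise LIMSEQ_unique in blast)
  have "(\<lambda>x. \<phi> x * g x) \<in> borel_measurable M"
    using \<phi>_meas mem_measurable[OF g] by measurable
  then show mem: "(\<lambda>x. \<phi> x * g x) \<in> X"
    using mem_AE_eq[OF h _ eq] by blast
  have "N h \<le> N (s 0) + N (\<lambda>x. h x - s 0 x)"
    using norm_le_diff[OF h s] .
  also have "\<dots> \<le> 2 * C * N g + 2 * (C * N g)"
    using floor_mult_mem(2)[OF \<phi> g] h_s0 by (simp add: s0)
  finally show "N (\<lambda>x. \<phi> x * g x) \<le> 4 * C * N g"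
    using norm_AE_eq[OF h mem eq] by simp
qed

end

definition multiplier_norm :: "'a measure \<Rightarrow> (('a \<Rightarrow> real) \<Rightarrow> real) \<Rightarrow> ('a \<Rightarrow> real) \<Rightarrow> real" where
  "multiplier_norm M N f = (SUP \<psi>\<in>unit_multipliers M. N (\<lambda>x. \<psi> x * f x))"

context rectangular_subseq_norm
begin

lemma mem_if_AE_abs_le:
  assumes f: "f \<in> borel_measurable M" and g: "g \<in> X" and le: "AE x in M. \<bar>f x\<bar> \<le> \<bar>g x\<bar>"
  shows "f \<in> X"
proof -
  obtain \<phi> where \<phi>: "\<phi> \<in> unit_multipliers M" and eq: "AE x in M. f x = \<phi> x * g x"
    using AE_abs_le_imp_unit_multiple[OF f mem_measurable[OF g] le] .
  from eq have "AE x in M. \<phi> x * g x = f x"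
    by auto
  then show ?thesis
    using mem_AE_eq[OF unit_multiplier_mem(1)[OF \<phi> g] f] by blast
qed

lemma multiplier_norm_upper:
  "f \<in> X \<Longrightarrow> \<psi> \<in> unit_multipliers M \<Longrightarrow> N (\<lambda>x. \<psi> x * f x) \<le> multiplier_norm M N f"
  unfolding multiplier_norm_def
  by (rule cSUP_upper) (auto intro!: bdd_aboveI2 unit_multiplier_mem(2))

lemma multiplier_norm_least:
  "(\<And>\<psi>. \<psi> \<in> unit_multipliers M \<Longrightarrow> N (\<lambda>x. \<psi> x * f x) \<le> a) \<Longrightarrow> multiplier_norm M N f \<le> a"
  unfolding multiplier_norm_def
  using one_in_unit_multipliers by (blast intro: cSUP_least)

lemma norm_le_multiplier_norm: "f \<in> X \<Longrightarrow> N f \<le> multiplier_norm M N f"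
  using multiplier_norm_upper[OF _ one_in_unit_multipliers] by simp

lemma multiplier_norm_le: "f \<in> X \<Longrightarrow> multiplier_norm M N f \<le> 4 * C * N f"
  by (rule multiplier_norm_least) (rule unit_multiplier_mem(2))

lemma multiplier_norm_nonneg: "f \<in> X \<Longrightarrow> 0 \<le> multiplier_norm M N f"
  using norm_nonneg norm_le_multiplier_norm by (blast intro: order_trans)

lemma multiplier_norm_eq_0_iff:
  assumes f: "f \<in> X"
  shows "multiplier_norm M N f = 0 \<longleftrightarrow> (AE x in M. f x = 0)"
proof -
  have "multiplier_norm M N f = 0 \<longleftrightarrow> N f = 0"
  proof
    assume "multiplier_norm M N f = 0"
    then show "N f = 0"
      using norm_le_multiplier_norm[OF f] norm_nonneg[OF f] by linarith
  next
    assume "N f = 0"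
    then have "multiplier_norm M N f \<le> 0"
      using multiplier_norm_le[OF f] by simp
    then show "multiplier_norm M N f = 0"
      using multiplier_norm_nonneg[OF f] by linarith
  qed
  then show ?thesis
    using norm_eq_0_iff[OF f] by simp
qed

lemma multiplier_norm_mono_AE:
  assumes f: "f \<in> X" and g: "g \<in> X" and le: "AE x in M. \<bar>f x\<bar> \<le> \<bar>g x\<bar>"
  shows "multiplier_norm M N f \<le> multiplier_norm M N g"
proof (rule multiplier_norm_least)
  fix \<psi> assume \<psi>: "\<psi> \<in> unit_multipliers M"
  obtain \<phi> where \<phi>: "\<phi> \<in> unit_multipliers M" and eq: "AE x in M. f x = \<phi> x * g x"
    using AE_abs_le_imp_unit_multiple[OF mem_measurable[OF f] mem_measurable[OF g] le] .
  have \<psi>\<phi>: "(\<lambda>x. \<psi> x * \<phi> x) \<in> unit_multipliers M"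
    using unit_multipliers_mult[OF \<psi> \<phi>] .
  from eq have "AE x in M. \<psi> x * f x = \<psi> x * \<phi> x * g x"
    by eventually_elim simp
  then have "N (\<lambda>x. \<psi> x * f x) = N (\<lambda>x. \<psi> x * \<phi> x * g x)"
    using norm_AE_eq[OF unit_multiplier_mem(1)[OF \<psi> f] unit_multiplier_mem(1)[OF \<psi>\<phi> g]] by blast
  also have "\<dots> \<le> multiplier_norm M N g"
    using multiplier_norm_upper[OF g \<psi>\<phi>] .
  finally show "N (\<lambda>x. \<psi> x * f x) \<le> multiplier_norm M N g" .
qed

lemma multiplier_norm_triangle:
  assumes f: "f \<in> X" and g: "g \<in> X"
  shows "multiplier_norm M N (\<lambda>x. f x + g x) \<le> multiplier_norm M N f + multiplier_norm M N g"
proof (rule multiplier_norm_least)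
  fix \<psi> assume \<psi>: "\<psi> \<in> unit_multipliers M"
  have "N (\<lambda>x. \<psi> x * (f x + g x)) \<le> N (\<lambda>x. \<psi> x * f x) + N (\<lambda>x. \<psi> x * g x)"
    using norm_triangle[OF unit_multiplier_mem(1)[OF \<psi> f] unit_multiplier_mem(1)[OF \<psi> g]]
    by (simp add: distrib_left)
  also have "\<dots> \<le> multiplier_norm M N f + multiplier_norm M N g"
    using multiplier_norm_upper[OF f \<psi>] multiplier_norm_upper[OF g \<psi>] by (rule add_mono)
  finally show "N (\<lambda>x. \<psi> x * (f x + g x)) \<le> multiplier_norm M N f + multiplier_norm M N g" .
qed

lemma multiplier_norm_scale_le:
  assumes f: "f \<in> X"
  shows "multiplier_norm M N (\<lambda>x. c * f x) \<le> \<bar>c\<bar> * multiplier_norm M N f"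
proof (rule multiplier_norm_least)
  fix \<psi> assume \<psi>: "\<psi> \<in> unit_multipliers M"
  have "N (\<lambda>x. \<psi> x * (c * f x)) = \<bar>c\<bar> * N (\<lambda>x. \<psi> x * f x)"
    using norm_scale[OF unit_multiplier_mem(1)[OF \<psi> f], of c] by (simp add: ac_simps)
  also have "\<dots> \<le> \<bar>c\<bar> * multiplier_norm M N f"
    using multiplier_norm_upper[OF f \<psi>] by (simp add: mult_left_mono)
  finally show "N (\<lambda>x. \<psi> x * (c * f x)) \<le> \<bar>c\<bar> * multiplier_norm M N f" .
qed

lemma multiplier_norm_scale:
  assumes f: "f \<in> X"
  shows "multiplier_norm M N (\<lambda>x. c * f x) = \<bar>c\<bar> * multiplier_norm M N f"
proof (cases "c = 0")
  case True
  then show ?thesis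
    using multiplier_norm_scale_le[OF f, of c] multiplier_norm_nonneg[OF scale_mem[OF f, of c]]
    by simp
next
  case False
  have "multiplier_norm M N (\<lambda>x. (1/c) * (c * f x)) \<le> \<bar>1/c\<bar> * multiplier_norm M N (\<lambda>x. c * f x)"
    using multiplier_norm_scale_le[OF scale_mem[OF f]] .
  then have "\<bar>c\<bar> * multiplier_norm M N f \<le> multiplier_norm M N (\<lambda>x. c * f x)"
    using False by (simp add: field_simps abs_divide)
  then show ?thesis
    using multiplier_norm_scale_le[OF f, of c] by simp
qed

lemma multiplier_norm_complete:
  assumes s: "\<And>n. s n \<in> X"
    and Cauchy: "\<And>e. e > 0 \<Longrightarrow> \<exists>K. \<forall>m\<ge>K. \<forall>n\<ge>K. multiplier_norm M N (\<lambda>x. s m x - s n x) < e"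
  shows "\<exists>f\<in>X. (\<lambda>n. multiplier_norm M N (\<lambda>x. s n x - f x)) \<longlonglongrightarrow> 0"
proof -
  have "\<exists>K. \<forall>m\<ge>K. \<forall>n\<ge>K. N (\<lambda>x. s m x - s n x) < e" if "e > 0" for e
    using Cauchy[OF that] norm_le_multiplier_norm[OF diff_mem[OF s s]] by (meson le_less_trans)
  then obtain f where f: "f \<in> X" and lim: "(\<lambda>n. N (\<lambda>x. s n x - f x)) \<longlonglongrightarrow> 0"
    using complete[of s, OF s] by blast
  have "(\<lambda>n. multiplier_norm M N (\<lambda>x. s n x - f x)) \<longlonglongrightarrow> 0"
  proof (rule tendsto_sandwich[of "\<lambda>n. 0" _ _ "\<lambda>n. 4 * C * N (\<lambda>x. s n x - f x)"])
    show "(\<lambda>n. 4 * C * N (\<lambda>x. s n x - f x)) \<longlonglongrightarrow> 0"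
      using tendsto_mult_right_zero[OF lim] .
  qed (use multiplier_norm_nonneg multiplier_norm_le diff_mem[OF s f] in auto)
  with f show ?thesis by blast
qed

lemma banach_function_space_multiplier_norm: "banach_function_space M X (multiplier_norm M N)"
proof -
  have "banach_mfs M X (multiplier_norm M N)"
    unfolding banach_mfs_def
    by (intro conjI ballI allI impI)
       (auto simp: multiplier_norm_eq_0_iff multiplier_norm_scale intro: mem_measurable mem_AE_eq zero_mem add_mem scale_mem multiplier_norm_nonneg
         multiplier_norm_eq_0_iff multiplier_norm_scale multiplier_norm_triangle multiplier_norm_complete)
  then show ?thesis
    unfolding banach_function_space_def using mem_if_AE_abs_le multiplier_norm_mono_AE by blast
qed

lemma equivalent_norms_multiplier_norm: "equivalent_norms X N (multiplier_norm M N)"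
  unfolding equivalent_norms_def using norm_le_multiplier_norm multiplier_norm_le C_pos
  by (intro exI[of _ 1] exI[of _ "4 * C"]) auto

end

theorem corollary4p2:
  fixes M :: "'a measure" and X :: "('a \<Rightarrow> real) set" and N :: "('a \<Rightarrow> real) \<Rightarrow> real"
  assumes "finite_measure M"
    and "banach_mfs M X N"
  shows "(\<exists>N'. equivalent_norms X N N' \<and> banach_function_space M X N')
         \<longleftrightarrow> (rectangular M X N \<and> subsequence_property M X N)"
proof
  assume "\<exists>N'. equivalent_norms X N N' \<and> banach_function_space M X N'"
  then obtain P where equiv: "equivalent_norms X N P" and "banach_lattice_norm M X P"
    by (auto simp: banach_function_space_iff_banach_lattice_norm)
  interpret P: banach_lattice_norm M X P by fact
  interpret banach_mfs_norm M X N
    using assms(2) by unfold_locales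
  show "rectangular M X N \<and> subsequence_property M X N"
    using rectangular_equivalent_norms[OF equiv P.rectangular]
      subsequence_property_equivalent_norms[OF equiv P.subsequence_property] by blast
next
  assume "rectangular M X N \<and> subsequence_property M X N"
  then obtain C where "rectangular_subseq_norm M X N C"
    using assms(2) unfolding rectangular_def rectangular_subseq_norm_def
      rectangular_subseq_norm_axioms_def banach_mfs_norm_def
    by blast
  then interpret rectangular_subseq_norm M X N C .
  show "\<exists>N'. equivalent_norms X N N' \<and> banach_function_space M X N'"
    using equivalent_norms_multiplier_norm banach_function_space_multiplier_norm by blast
qed

end
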